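(* If $M$ is a monoidal category which admits functorial inverses, then the underlying category of $M$ is a groupoid.
   Context: A monoidal category $M$ admits functorial inverses if there exist a functor $i:M\to M$ and a natural isomorphism $x\otimes i(x)\cong 1$. *)

theory Defs
  imports Main
begin

text \<open>A category whose objects are all elements of type 'o and whose morphisms are
  all elements of type 'm.  cmp g f is the composite g after f (defined when cod f = dom g).\<close>

record ('o, 'm) cat =
  cdom :: "'m \<Rightarrow> 'o"
  ccod :: "'m \<Rightarrow> 'o"
  cide :: "'o \<Rightarrow> 'm"
  ccmp :: "'m \<Rightarrow> 'm \<Rightarrow> 'm"

definition category :: "('o, 'm, 'z) cat_scheme \<Rightarrow> bool" where
  "category C \<longleftrightarrow>
     (\<forall>a. cdom C (cide C a) = a \<and> ccod C (cide C a) = a) \<and>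
     (\<forall>f g. ccod C f = cdom C g \<longrightarrow>
        cdom C (ccmp C g f) = cdom C f \<and> ccod C (ccmp C g f) = ccod C g) \<and>
     (\<forall>f. ccmp C (cide C (ccod C f)) f = f \<and> ccmp C f (cide C (cdom C f)) = f) \<and>
     (\<forall>f g h. ccod C f = cdom C g \<and> ccod C g = cdom C h \<longrightarrow>
        ccmp C h (ccmp C g f) = ccmp C (ccmp C h g) f)"

definition iso :: "('o, 'm, 'z) cat_scheme \<Rightarrow> 'm \<Rightarrow> bool" where
  "iso C f \<longleftrightarrow> (\<exists>g. cdom C g = ccod C f \<and> ccod C g = cdom C f \<and>
       ccmp C g f = cide C (cdom C f) \<and> ccmp C f g = cide C (ccod C f))"

definition groupoid :: "('o, 'm, 'z) cat_scheme \<Rightarrow> bool" where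
  "groupoid C \<longleftrightarrow> category C \<and> (\<forall>f. iso C f)"

definition endofunctor :: "('o, 'm, 'z) cat_scheme \<Rightarrow> ('o \<Rightarrow> 'o) \<Rightarrow> ('m \<Rightarrow> 'm) \<Rightarrow> bool" where
  "endofunctor C Fo Fm \<longleftrightarrow>
     (\<forall>f. cdom C (Fm f) = Fo (cdom C f) \<and> ccod C (Fm f) = Fo (ccod C f)) \<and>
     (\<forall>a. Fm (cide C a) = cide C (Fo a)) \<and>
     (\<forall>f g. ccod C f = cdom C g \<longrightarrow> Fm (ccmp C g f) = ccmp C (Fm g) (Fm f))"

record ('o, 'm) moncat = "('o, 'm) cat" +
  ctobj :: "'o \<Rightarrow> 'o \<Rightarrow> 'o"
  ctmor :: "'m \<Rightarrow> 'm \<Rightarrow> 'm"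
  cunit :: "'o"
  cassoc :: "'o \<Rightarrow> 'o \<Rightarrow> 'o \<Rightarrow> 'm"
  clunit :: "'o \<Rightarrow> 'm"
  crunit :: "'o \<Rightarrow> 'm"

definition monoidal :: "('o, 'm, 'z) moncat_scheme \<Rightarrow> bool" where
  "monoidal M \<longleftrightarrow>
     (let D = cdom M; Cd = ccod M; ii = cide M; c = ccmp M; T = ctobj M; t = ctmor M;
          I = cunit M; as = cassoc M; lu = clunit M; ru = crunit M in
     category M \<and>
     (\<forall>f g. D (t f g) = T (D f) (D g) \<and> Cd (t f g) = T (Cd f) (Cd g)) \<and>
     (\<forall>a b. t (ii a) (ii b) = ii (T a b)) \<and>
     (\<forall>f g f' g'. Cd f = D g \<and> Cd f' = D g' \<longrightarrow>
        t (c g f) (c g' f') = c (t g g') (t f f')) \<and>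
     (\<forall>a b d. D (as a b d) = T (T a b) d \<and> Cd (as a b d) = T a (T b d) \<and> iso M (as a b d)) \<and>
     (\<forall>f g h. c (as (Cd f) (Cd g) (Cd h)) (t (t f g) h) =
              c (t f (t g h)) (as (D f) (D g) (D h))) \<and>
     (\<forall>a. D (lu a) = T I a \<and> Cd (lu a) = a \<and> iso M (lu a)) \<and>
     (\<forall>a. D (ru a) = T a I \<and> Cd (ru a) = a \<and> iso M (ru a)) \<and>
     (\<forall>f. c (lu (Cd f)) (t (ii I) f) = c f (lu (D f))) \<and>
     (\<forall>f. c (ru (Cd f)) (t f (ii I)) = c f (ru (D f))) \<and>
     (\<forall>a b d e. c (t (ii a) (as b d e)) (c (as a (T b d) e) (t (as a b d) (ii e)))
               = c (as a b (T d e)) (as (T a b) d e)) \<and>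
     (\<forall>a b. c (t (ii a) (lu b)) (as a I b) = t (ru a) (ii b)))"

definition admits_functorial_inverses :: "('o, 'm, 'z) moncat_scheme \<Rightarrow> bool" where
  "admits_functorial_inverses M \<longleftrightarrow>
     (\<exists>io im \<epsilon>. endofunctor M io im \<and>
        (\<forall>a. cdom M (\<epsilon> a) = ctobj M a (io a) \<and> ccod M (\<epsilon> a) = cunit M \<and> iso M (\<epsilon> a)) \<and>
        (\<forall>f. ccmp M (\<epsilon> (ccod M f)) (ctmor M f (im f)) =
             ccmp M (cide M (cunit M)) (\<epsilon> (cdom M f))))"

end

theory Submission
  imports Defs
begin

text \<open>Let \<open>f : a \<rightarrow> b\<close>. Naturality of \<open>\<epsilon>\<close> gives \<open>\<epsilon>\<^sub>b \<circ> (f \<otimes> i f) = \<epsilon>\<^sub>a\<close>, so \<open>f \<otimes> i f\<close> is an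
  isomorphism. Factoring it by the interchange law as \<open>(f \<otimes> i b) \<circ> (a \<otimes> i f)\<close> and as
  \<open>(b \<otimes> i f) \<circ> (f \<otimes> i a)\<close> shows that \<open>f \<otimes> i b\<close> is a split epimorphism and \<open>f \<otimes> i a\<close> a split
  monomorphism. Every object \<open>c = i x\<close> has a right tensor inverse \<open>d = i (i x)\<close>, and then
  \<open>x \<mapsto> (x \<otimes> c) \<otimes> d\<close> is naturally isomorphic to the identity functor; hence tensoring on the right
  with \<open>c\<close> reflects split epimorphisms and split monomorphisms. So \<open>f\<close> is both, i.e. an
  isomorphism.\<close>

definition split_epi :: "('o, 'm, 'z) cat_scheme \<Rightarrow> 'm \<Rightarrow> bool" where
  "split_epi C f \<longleftrightarrow>
     (\<exists>s. cdom C s = ccod C f \<and> ccod C s = cdom C f \<and> ccmp C f s = cide C (ccod C f))"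

definition split_mono :: "('o, 'm, 'z) cat_scheme \<Rightarrow> 'm \<Rightarrow> bool" where
  "split_mono C f \<longleftrightarrow>
     (\<exists>r. cdom C r = ccod C f \<and> ccod C r = cdom C f \<and> ccmp C r f = cide C (cdom C f))"

lemma endofunctor_comp:
  assumes "endofunctor C Fo Fm" and "endofunctor C Go Gm"
  shows "endofunctor C (Go \<circ> Fo) (Gm \<circ> Fm)"
  using assms unfolding endofunctor_def by simp

locale category_on =
  fixes C :: "('o, 'm, 'z) cat_scheme"
  assumes category: "category C"
begin

abbreviation comp (infixr "\<cdot>" 55) where "g \<cdot> f \<equiv> ccmp C g f"

lemma dom_id [simp]: "cdom C (cide C a) = a"
  and cod_id [simp]: "ccod C (cide C a) = a"
  using category unfolding category_def by auto

lemma dom_comp [simp]: "ccod C f = cdom C g \<Longrightarrow> cdom C (g \<cdot> f) = cdom C f"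
  and cod_comp [simp]: "ccod C f = cdom C g \<Longrightarrow> ccod C (g \<cdot> f) = ccod C g"
  using category unfolding category_def by auto

lemma comp_id_left [simp]: "ccod C f = a \<Longrightarrow> cide C a \<cdot> f = f"
  and comp_id_right [simp]: "cdom C f = a \<Longrightarrow> f \<cdot> cide C a = f"
  using category unfolding category_def by auto

lemma comp_assoc [simp]:
  "ccod C f = cdom C g \<Longrightarrow> ccod C g = cdom C h \<Longrightarrow> (h \<cdot> g) \<cdot> f = h \<cdot> (g \<cdot> f)"
  using category unfolding category_def by metis

lemma comp_reassoc:
  "g \<cdot> f = k \<Longrightarrow> ccod C f = cdom C g \<Longrightarrow> ccod C h = cdom C f \<Longrightarrow> g \<cdot> f \<cdot> h = k \<cdot> h"
  by (metis comp_assoc)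

lemma isoE:
  assumes "iso C f"
  obtains g where "cdom C g = ccod C f" "ccod C g = cdom C f"
    "g \<cdot> f = cide C (cdom C f)" "f \<cdot> g = cide C (ccod C f)"
  using assms unfolding iso_def by blast

lemma split_epiE:
  assumes "split_epi C f"
  obtains s where "cdom C s = ccod C f" "ccod C s = cdom C f" "f \<cdot> s = cide C (ccod C f)"
  using assms unfolding split_epi_def by blast

lemma split_monoE:
  assumes "split_mono C f"
  obtains r where "cdom C r = ccod C f" "ccod C r = cdom C f" "r \<cdot> f = cide C (cdom C f)"
  using assms unfolding split_mono_def by blast

lemma iso_imp_split_epi: "iso C f \<Longrightarrow> split_epi C f"
  and iso_imp_split_mono: "iso C f \<Longrightarrow> split_mono C f"
  unfolding iso_def split_epi_def split_mono_def by blast+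

lemma split_mono_split_epi_imp_iso:
  assumes "split_mono C f" and "split_epi C f"
  shows "iso C f"
proof -
  obtain r where r: "cdom C r = ccod C f" "ccod C r = cdom C f" "r \<cdot> f = cide C (cdom C f)"
    using assms(1) by (rule split_monoE)
  obtain s where s: "cdom C s = ccod C f" "ccod C s = cdom C f" "f \<cdot> s = cide C (ccod C f)"
    using assms(2) by (rule split_epiE)
  have "r = r \<cdot> f \<cdot> s" using r s by simp
  also have "\<dots> = s" using r s by (metis comp_assoc comp_id_left)
  finally show ?thesis using r s unfolding iso_def by auto
qed

lemma split_epi_comp:
  assumes "split_epi C f" and "split_epi C g" and "ccod C f = cdom C g"
  shows "split_epi C (g \<cdot> f)"
proof -
  obtain s where s: "cdom C s = ccod C f" "ccod C s = cdom C f" "f \<cdot> s = cide C (ccod C f)"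
    using assms(1) by (rule split_epiE)
  obtain t where t: "cdom C t = ccod C g" "ccod C t = cdom C g" "g \<cdot> t = cide C (ccod C g)"
    using assms(2) by (rule split_epiE)
  have "(g \<cdot> f) \<cdot> s \<cdot> t = g \<cdot> t" using comp_reassoc[OF s(3)] s t assms(3) by simp
  then show ?thesis unfolding split_epi_def using s t assms(3) by (intro exI[of _ "s \<cdot> t"]) simp
qed

lemma split_mono_comp:
  assumes "split_mono C f" and "split_mono C g" and "ccod C f = cdom C g"
  shows "split_mono C (g \<cdot> f)"
proof -
  obtain r where r: "cdom C r = ccod C f" "ccod C r = cdom C f" "r \<cdot> f = cide C (cdom C f)"
    using assms(1) by (rule split_monoE)
  obtain q where q: "cdom C q = ccod C g" "ccod C q = cdom C g" "q \<cdot> g = cide C (cdom C g)"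
    using assms(2) by (rule split_monoE)
  have "(r \<cdot> q) \<cdot> g \<cdot> f = r \<cdot> f" using comp_reassoc[OF q(3)] r q assms(3) by simp
  then show ?thesis unfolding split_mono_def using r q assms(3) by (intro exI[of _ "r \<cdot> q"]) simp
qed

lemma iso_id: "iso C (cide C a)"
  unfolding iso_def by (intro exI[of _ "cide C a"]) simp

lemma iso_comp:
  assumes "iso C f" and "iso C g" and "ccod C f = cdom C g"
  shows "iso C (g \<cdot> f)"
  using assms
  by (intro split_mono_split_epi_imp_iso split_epi_comp split_mono_comp)
    (simp_all add: iso_imp_split_epi iso_imp_split_mono)

lemma split_epi_comp_cancel:
  assumes "split_epi C (g \<cdot> f)" and "ccod C f = cdom C g"
  shows "split_epi C g"
proof -
  obtain s where "cdom C s = ccod C (g \<cdot> f)" "ccod C s = cdom C (g \<cdot> f)"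
      "(g \<cdot> f) \<cdot> s = cide C (ccod C (g \<cdot> f))"
    using assms(1) by (rule split_epiE)
  then show ?thesis unfolding split_epi_def using assms(2) by (intro exI[of _ "f \<cdot> s"]) simp
qed

lemma split_mono_comp_cancel:
  assumes "split_mono C (g \<cdot> f)" and "ccod C f = cdom C g"
  shows "split_mono C f"
proof -
  obtain r where "cdom C r = ccod C (g \<cdot> f)" "ccod C r = cdom C (g \<cdot> f)"
      "r \<cdot> (g \<cdot> f) = cide C (cdom C (g \<cdot> f))"
    using assms(1) by (rule split_monoE)
  then show ?thesis unfolding split_mono_def using assms(2) by (intro exI[of _ "r \<cdot> g"]) simp
qed

lemma iso_comp_cancel:
  assumes "iso C g" and "iso C (g \<cdot> h)" and "ccod C h = cdom C g"
  shows "iso C h"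
proof -
  obtain g' where g': "cdom C g' = ccod C g" "ccod C g' = cdom C g" "g' \<cdot> g = cide C (cdom C g)"
    "g \<cdot> g' = cide C (ccod C g)"
    using assms(1) by (rule isoE)
  have "iso C g'" unfolding iso_def using g' by (intro exI[of _ g]) simp
  then have "iso C (g' \<cdot> g \<cdot> h)" using iso_comp[OF assms(2)] g' assms(3) by simp
  moreover have "g' \<cdot> g \<cdot> h = h" using comp_reassoc[OF g'(3)] g' assms(3) by simp
  ultimately show ?thesis by simp
qed

context
  fixes Fo Fm
  assumes endofunctor: "endofunctor C Fo Fm"
begin

lemma dom_Fm [simp]: "cdom C (Fm f) = Fo (cdom C f)"
  and cod_Fm [simp]: "ccod C (Fm f) = Fo (ccod C f)"
  and Fm_id [simp]: "Fm (cide C a) = cide C (Fo a)"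
  using endofunctor unfolding endofunctor_def by auto

lemma Fm_comp: "ccod C f = cdom C g \<Longrightarrow> Fm (g \<cdot> f) = Fm g \<cdot> Fm f"
  using endofunctor unfolding endofunctor_def by blast

lemma endofunctor_split_epi:
  assumes "split_epi C f"
  shows "split_epi C (Fm f)"
proof -
  obtain s where s: "cdom C s = ccod C f" "ccod C s = cdom C f" "f \<cdot> s = cide C (ccod C f)"
    using assms by (rule split_epiE)
  then have "Fm f \<cdot> Fm s = cide C (Fo (ccod C f))" by (simp flip: Fm_comp)
  then show ?thesis unfolding split_epi_def using s by (intro exI[of _ "Fm s"]) simp
qed

lemma endofunctor_split_mono:
  assumes "split_mono C f"
  shows "split_mono C (Fm f)"
proof -
  obtain r where r: "cdom C r = ccod C f" "ccod C r = cdom C f" "r \<cdot> f = cide C (cdom C f)"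
    using assms by (rule split_monoE)
  then have "Fm r \<cdot> Fm f = cide C (Fo (cdom C f))" by (simp flip: Fm_comp)
  then show ?thesis unfolding split_mono_def using r by (intro exI[of _ "Fm r"]) simp
qed

context
  fixes \<eta>
  assumes \<eta>_dom: "\<And>x. cdom C (\<eta> x) = Fo x" and \<eta>_cod: "\<And>x. ccod C (\<eta> x) = x"
    and \<eta>_iso: "\<And>x. iso C (\<eta> x)"
    and \<eta>_natural: "\<And>f. \<eta> (ccod C f) \<cdot> Fm f = f \<cdot> \<eta> (cdom C f)"
begin

lemma natural_iso_reflects_split_epi:
  assumes "split_epi C (Fm f)"
  shows "split_epi C f"
proof -
  have "split_epi C (\<eta> (ccod C f) \<cdot> Fm f)"
    using split_epi_comp[OF assms iso_imp_split_epi[OF \<eta>_iso]] \<eta>_dom by simp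
  then have "split_epi C (f \<cdot> \<eta> (cdom C f))" by (simp only: \<eta>_natural)
  then show ?thesis using \<eta>_cod by (rule split_epi_comp_cancel)
qed

lemma natural_iso_reflects_split_mono:
  assumes "split_mono C (Fm f)"
  shows "split_mono C f"
proof -
  obtain \<eta>' where \<eta>': "cdom C \<eta>' = cdom C f" "ccod C \<eta>' = Fo (cdom C f)"
      "\<eta> (cdom C f) \<cdot> \<eta>' = cide C (cdom C f)"
    using \<eta>_iso[of "cdom C f"] by (rule isoE) (simp_all add: \<eta>_dom \<eta>_cod)
  then have \<eta>'_split_mono: "split_mono C \<eta>'"
    unfolding split_mono_def using \<eta>_dom \<eta>_cod by (intro exI[of _ "\<eta> (cdom C f)"]) simp
  have "split_mono C (\<eta> (ccod C f) \<cdot> Fm f)"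
    using split_mono_comp[OF assms iso_imp_split_mono[OF \<eta>_iso]] \<eta>_dom by simp
  then have "split_mono C (f \<cdot> \<eta> (cdom C f))" by (simp only: \<eta>_natural)
  then have "split_mono C ((f \<cdot> \<eta> (cdom C f)) \<cdot> \<eta>')"
    by (rule split_mono_comp[OF \<eta>'_split_mono]) (simp add: \<eta>' \<eta>_dom \<eta>_cod)
  moreover have "(f \<cdot> \<eta> (cdom C f)) \<cdot> \<eta>' = f" using \<eta>' \<eta>_dom \<eta>_cod by simp
  ultimately show ?thesis by simp
qed

end

end

end

locale monoidal_category =
  fixes M :: "('o, 'm, 'z) moncat_scheme"
  assumes monoidal: "monoidal M"
begin

sublocale category_on M
  using monoidal unfolding monoidal_def Let_def by unfold_locales blast

notation comp (infixr "\<cdot>" 55)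
abbreviation tensor (infixr "\<star>" 60) where "f \<star> g \<equiv> ctmor M f g"
abbreviation T where "T \<equiv> ctobj M"

lemma dom_tensor [simp]: "cdom M (f \<star> g) = T (cdom M f) (cdom M g)"
  and cod_tensor [simp]: "ccod M (f \<star> g) = T (ccod M f) (ccod M g)"
  and tensor_id [simp]: "cide M a \<star> cide M b = cide M (T a b)"
  using monoidal unfolding monoidal_def Let_def by auto

lemma interchange:
  "ccod M f = cdom M g \<Longrightarrow> ccod M f' = cdom M g' \<Longrightarrow> (g \<cdot> f) \<star> (g' \<cdot> f') = (g \<star> g') \<cdot> (f \<star> f')"
  using monoidal unfolding monoidal_def Let_def by auto

lemma dom_assoc [simp]: "cdom M (cassoc M a b c) = T (T a b) c"
  and cod_assoc [simp]: "ccod M (cassoc M a b c) = T a (T b c)"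
  and iso_assoc: "iso M (cassoc M a b c)"
  and assoc_natural: "cassoc M (ccod M f) (ccod M g) (ccod M h) \<cdot> ((f \<star> g) \<star> h)
                     = (f \<star> (g \<star> h)) \<cdot> cassoc M (cdom M f) (cdom M g) (cdom M h)"
  and dom_runit [simp]: "cdom M (crunit M a) = T a (cunit M)"
  and cod_runit [simp]: "ccod M (crunit M a) = a"
  and iso_runit: "iso M (crunit M a)"
  and runit_natural: "crunit M (ccod M f) \<cdot> (f \<star> cide M (cunit M)) = f \<cdot> crunit M (cdom M f)"
  using monoidal unfolding monoidal_def Let_def by auto

lemma iso_tensor: "iso M f \<Longrightarrow> iso M g \<Longrightarrow> iso M (f \<star> g)"
proof -
  assume "iso M f" "iso M g"
  then obtain f' g' where
    "cdom M f' = ccod M f" "ccod M f' = cdom M f" "f' \<cdot> f = cide M (cdom M f)" "f \<cdot> f' = cide M (ccod M f)"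
    "cdom M g' = ccod M g" "ccod M g' = cdom M g" "g' \<cdot> g = cide M (cdom M g)" "g \<cdot> g' = cide M (ccod M g)"
    by (elim isoE)
  then show "iso M (f \<star> g)" unfolding iso_def
    by (intro exI[of _ "f' \<star> g'"]) (simp flip: interchange)
qed

lemma endofunctor_tensor_right: "endofunctor M (\<lambda>a. T a c) (\<lambda>f. f \<star> cide M c)"
  unfolding endofunctor_def by (simp flip: interchange)

lemma endofunctor_tensor_right_twice:
  "endofunctor M (\<lambda>a. T (T a c) d) (\<lambda>f. (f \<star> cide M c) \<star> cide M d)"
  using endofunctor_comp[OF endofunctor_tensor_right endofunctor_tensor_right] by (simp add: o_def)

definition has_right_tensor_inverse :: "'o \<Rightarrow> bool" where
  "has_right_tensor_inverse c \<longleftrightarrow>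
     (\<exists>d e. cdom M e = T c d \<and> ccod M e = cunit M \<and> iso M e)"

context
  fixes c d e
  assumes dom_e: "cdom M e = T c d" and cod_e: "ccod M e = cunit M" and iso_e: "iso M e"
begin

definition cancel_right :: "'o \<Rightarrow> 'm" where
  "cancel_right x = crunit M x \<cdot> (cide M x \<star> e) \<cdot> cassoc M x c d"

lemma dom_cancel_right: "cdom M (cancel_right x) = T (T x c) d"
  and cod_cancel_right: "ccod M (cancel_right x) = x"
  unfolding cancel_right_def using dom_e cod_e by simp_all

lemma iso_cancel_right: "iso M (cancel_right x)"
  unfolding cancel_right_def using dom_e cod_e
  by (intro iso_comp iso_tensor iso_id iso_e iso_assoc iso_runit) simp_all

lemma cancel_right_natural:
  "cancel_right (ccod M f) \<cdot> ((f \<star> cide M c) \<star> cide M d) = f \<cdot> cancel_right (cdom M f)"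
proof -
  let ?x = "cdom M f" and ?y = "ccod M f"
  have assoc_f: "cassoc M ?y c d \<cdot> ((f \<star> cide M c) \<star> cide M d) = (f \<star> cide M (T c d)) \<cdot> cassoc M ?x c d"
    using assoc_natural[of f "cide M c" "cide M d"] by simp
  have e_f: "(cide M ?y \<star> e) \<cdot> (f \<star> cide M (T c d)) = (f \<star> cide M (cunit M)) \<cdot> (cide M ?x \<star> e)"
    using dom_e cod_e by (simp flip: interchange)
  have "cancel_right ?y \<cdot> ((f \<star> cide M c) \<star> cide M d)
      = crunit M ?y \<cdot> (cide M ?y \<star> e) \<cdot> cassoc M ?y c d \<cdot> ((f \<star> cide M c) \<star> cide M d)"
    unfolding cancel_right_def using dom_e cod_e by simp
  also have "\<dots> = crunit M ?y \<cdot> (cide M ?y \<star> e) \<cdot> (f \<star> cide M (T c d)) \<cdot> cassoc M ?x c d"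
    by (simp only: assoc_f)
  also have "\<dots> = crunit M ?y \<cdot> (f \<star> cide M (cunit M)) \<cdot> (cide M ?x \<star> e) \<cdot> cassoc M ?x c d"
    using comp_reassoc[OF e_f] dom_e cod_e by simp
  also have "\<dots> = f \<cdot> crunit M ?x \<cdot> (cide M ?x \<star> e) \<cdot> cassoc M ?x c d"
    using comp_reassoc[OF runit_natural[of f]] dom_e cod_e by simp
  finally show ?thesis unfolding cancel_right_def .
qed

end

lemma tensor_right_reflects_split_epi:
  assumes "has_right_tensor_inverse c" and "split_epi M (f \<star> cide M c)"
  shows "split_epi M f"
proof -
  obtain d e where e: "cdom M e = T c d" "ccod M e = cunit M" "iso M e"
    using assms(1) unfolding has_right_tensor_inverse_def by blast
  have "split_epi M ((f \<star> cide M c) \<star> cide M d)"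
    using endofunctor_split_epi[OF endofunctor_tensor_right assms(2)] .
  then show ?thesis
    by (rule category_on.natural_iso_reflects_split_epi[OF category_on_axioms
          endofunctor_tensor_right_twice dom_cancel_right[OF e] cod_cancel_right[OF e]
          iso_cancel_right[OF e] cancel_right_natural[OF e]])
qed

lemma tensor_right_reflects_split_mono:
  assumes "has_right_tensor_inverse c" and "split_mono M (f \<star> cide M c)"
  shows "split_mono M f"
proof -
  obtain d e where e: "cdom M e = T c d" "ccod M e = cunit M" "iso M e"
    using assms(1) unfolding has_right_tensor_inverse_def by blast
  have "split_mono M ((f \<star> cide M c) \<star> cide M d)"
    using endofunctor_split_mono[OF endofunctor_tensor_right assms(2)] .
  then show ?thesis
    by (rule category_on.natural_iso_reflects_split_mono[OF category_on_axioms
          endofunctor_tensor_right_twice dom_cancel_right[OF e] cod_cancel_right[OF e]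
          iso_cancel_right[OF e] cancel_right_natural[OF e]])
qed

lemma iso_of_iso_tensor:
  assumes "iso M (f \<star> g)"
    and "has_right_tensor_inverse (cdom M g)" and "has_right_tensor_inverse (ccod M g)"
  shows "iso M f"
proof (rule split_mono_split_epi_imp_iso)
  have "f \<star> g = (f \<star> cide M (ccod M g)) \<cdot> (cide M (cdom M f) \<star> g)"
    by (simp flip: interchange)
  then have "split_epi M ((f \<star> cide M (ccod M g)) \<cdot> (cide M (cdom M f) \<star> g))"
    using iso_imp_split_epi[OF assms(1)] by simp
  then show "split_epi M f"
    by (rule tensor_right_reflects_split_epi[OF assms(3) split_epi_comp_cancel]) simp
  have "f \<star> g = (cide M (ccod M f) \<star> g) \<cdot> (f \<star> cide M (cdom M g))"
    by (simp flip: interchange)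
  then have "split_mono M ((cide M (ccod M f) \<star> g) \<cdot> (f \<star> cide M (cdom M g)))"
    using iso_imp_split_mono[OF assms(1)] by simp
  then show "split_mono M f"
    by (rule tensor_right_reflects_split_mono[OF assms(2) split_mono_comp_cancel]) simp
qed

end

theorem lemma3p13:
  fixes M :: "('o, 'm, 'z) moncat_scheme"
  assumes "monoidal M" and "admits_functorial_inverses M"
  shows "groupoid M"
proof -
  interpret monoidal_category M by (rule monoidal_category.intro) (rule assms(1))
  obtain io im \<epsilon> where i: "endofunctor M io im"
    and \<epsilon>: "\<And>a. cdom M (\<epsilon> a) = T a (io a) \<and> ccod M (\<epsilon> a) = cunit M \<and> iso M (\<epsilon> a)"
    and \<epsilon>_natural: "\<And>f. \<epsilon> (ccod M f) \<cdot> (f \<star> im f) = cide M (cunit M) \<cdot> \<epsilon> (cdom M f)"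
    using assms(2) unfolding admits_functorial_inverses_def by blast
  have io_invertible: "has_right_tensor_inverse (io a)" for a
    unfolding has_right_tensor_inverse_def using \<epsilon>[of "io a"] by blast
  have "iso M f" for f
  proof (rule iso_of_iso_tensor)
    have "\<epsilon> (ccod M f) \<cdot> (f \<star> im f) = \<epsilon> (cdom M f)"
      using \<epsilon>_natural[of f] \<epsilon> by simp
    then show "iso M (f \<star> im f)"
      using iso_comp_cancel[of "\<epsilon> (ccod M f)" "f \<star> im f"] \<epsilon> cod_Fm[OF i] by simp
  qed (simp_all add: dom_Fm[OF i] cod_Fm[OF i] io_invertible)
  then show ?thesis unfolding groupoid_def using category by blast
qed

end
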